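(* Let $P$ be a path with red edge costs in $\{a,b\}$, $0\le a<b$, and let $\sigma$ be the number of bad $a$-blocks of $P$. Let $r^*$ be the optimal revenue of $\mathsf{StackMST}(0,0)$ with red tree $P$. Then $$r^*\le c(P)-\min\left\{\sigma a,\ \left\lfloor\frac{\sigma}{2}\right\rfloor(b-a)+\left(\sigma-2\left\lfloor\frac{\sigma}{2}\right\rfloor\right)\min\{a,b-a\}\right\}.$$
   Context: Budgeted Stackelberg MST game $\mathsf{StackMST}(\gamma,\Delta)$: we are given a tree $T=(V,E(T))$ whose (red) edges have fixed costs $c(e)\ge 0$, a non-negative activation cost $\gamma(e)$ for every pair $e\notin E(T)$ of vertices, and a budget $\Delta$. The leader selects a set $F$ of pairs not in $E(T)$ with $\sum_{e\in F}\gamma(e)\le\Delta$ and prices $p:F\to\mathbb{R}^+$; the follower computes a minimum spanning tree $M$ of $(V,E(T)\cup F)$ (weights $c$ on red edges, $p$ on $F$), breaking ties in favor of the leader's revenue $\sum_{e\in F\cap M}p(e)$, which the leader maximizes. $\mathsf{StackMST}(0,0)$ is the case $\gamma\equiv0,\Delta=0$ (any new edges may be added freely). For the red path $P$: $c(P)$ is the total cost of its edges; an $a$-block is an inclusion-maximal subpath of $P$ all of whose edges have cost $a$; an $a$-block is good if it has at least 3 edges and bad otherwise. *)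

theory Defs
  imports Complex_Main
begin

text \<open>The red path P has vertices 0,...,n and red edges {i, i+1} for i < n,
  the edge {i, i+1} having cost c i. Edges are 2-element vertex sets.\<close>

definition path_vertices :: "nat \<Rightarrow> nat set" where
  "path_vertices n = {0..n}"

definition path_edges :: "nat \<Rightarrow> nat set set" where
  "path_edges n = {{i, Suc i} | i. i < n}"

definition nonpath_pairs :: "nat \<Rightarrow> nat set set" where
  "nonpath_pairs n = {{u, v} | u v. u \<le> n \<and> v \<le> n \<and> u \<noteq> v} - path_edges n"

definition path_cost :: "nat \<Rightarrow> (nat \<Rightarrow> real) \<Rightarrow> real" where
  "path_cost n c = (\<Sum>i<n. c i)"

definition connects :: "nat set \<Rightarrow> nat set set \<Rightarrow> bool" where
  "connects V M \<longleftrightarrow> (\<forall>u\<in>V. \<forall>v\<in>V. (u, v) \<in> {(x, y). {x, y} \<in> M}\<^sup>*)"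

definition spanning_tree :: "nat set \<Rightarrow> nat set set \<Rightarrow> nat set set \<Rightarrow> bool" where
  "spanning_tree V E M \<longleftrightarrow> M \<subseteq> E \<and> connects V M \<and> card M = card V - 1"

definition edge_weight :: "nat \<Rightarrow> (nat \<Rightarrow> real) \<Rightarrow> (nat set \<Rightarrow> real) \<Rightarrow> nat set \<Rightarrow> real" where
  "edge_weight n c p e = (if e \<in> path_edges n then c (THE i. i < n \<and> e = {i, Suc i}) else p e)"

definition tree_weight :: "nat \<Rightarrow> (nat \<Rightarrow> real) \<Rightarrow> (nat set \<Rightarrow> real) \<Rightarrow> nat set set \<Rightarrow> real" where
  "tree_weight n c p M = (\<Sum>e\<in>M. edge_weight n c p e)"

definition is_mst :: "nat \<Rightarrow> (nat \<Rightarrow> real) \<Rightarrow> nat set set \<Rightarrow> (nat set \<Rightarrow> real) \<Rightarrow> nat set set \<Rightarrow> bool" where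
  "is_mst n c F p M \<longleftrightarrow>
     spanning_tree (path_vertices n) (path_edges n \<union> F) M \<and>
     (\<forall>M'. spanning_tree (path_vertices n) (path_edges n \<union> F) M' \<longrightarrow>
        tree_weight n c p M \<le> tree_weight n c p M')"

definition revenue :: "nat set set \<Rightarrow> (nat set \<Rightarrow> real) \<Rightarrow> nat set set \<Rightarrow> real" where
  "revenue F p M = (\<Sum>e\<in>F \<inter> M. p e)"

definition follower_choice :: "nat \<Rightarrow> (nat \<Rightarrow> real) \<Rightarrow> nat set set \<Rightarrow> (nat set \<Rightarrow> real) \<Rightarrow> nat set set \<Rightarrow> bool" where
  "follower_choice n c F p M \<longleftrightarrow>
     is_mst n c F p M \<and> (\<forall>M'. is_mst n c F p M' \<longrightarrow> revenue F p M' \<le> revenue F p M)"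

text \<open>a-blocks: inclusion-maximal runs of consecutive red edges i..j (edge indices) of cost a.\<close>
definition a_blocks :: "nat \<Rightarrow> (nat \<Rightarrow> real) \<Rightarrow> real \<Rightarrow> (nat \<times> nat) set" where
  "a_blocks n c a = {(i, j). i \<le> j \<and> j < n \<and> (\<forall>k\<in>{i..j}. c k = a) \<and>
       (i = 0 \<or> c (i - 1) \<noteq> a) \<and> (Suc j = n \<or> c (Suc j) \<noteq> a)}"

definition num_bad_blocks :: "nat \<Rightarrow> (nat \<Rightarrow> real) \<Rightarrow> real \<Rightarrow> nat" where
  "num_bad_blocks n c a = card {(i, j) \<in> a_blocks n c a. j - i + 1 < 3}"

end

theory Submission
  imports Defs
begin

text \<open>Let A be the set of a-edges of P, M the follower's tree and C the edges of M of weight at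
  most a, i.e. the a-edges of M together with the leader edges priced at most a. Every leader
  edge of M is priced at most b, so c(P) - r \<ge> a |M \<inter> A| + (b - a) (|C| - |A|). By the cut
  property, C connects the ends of every a-edge, so A \<union> C has |C| - |A| components fewer than
  A, and at most 2 (|C| - |A|) components of A get merged. A bad block either has an
  edge in M, charged against M \<inter> A, or (having at most three vertices) is left by an edge of C,
  so that its a-component is merged.\<close>

definition edge_rel :: "'a set set \<Rightarrow> ('a \<times> 'a) set" where
  "edge_rel E = {(x, y). {x, y} \<in> E}"

abbreviation reachable :: "'a set set \<Rightarrow> 'a \<Rightarrow> 'a \<Rightarrow> bool" where
  "reachable E x y \<equiv> (x, y) \<in> (edge_rel E)\<^sup>*"

definition component_of :: "'a set \<Rightarrow> 'a set set \<Rightarrow> 'a \<Rightarrow> 'a set" where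
  "component_of V E v = {u \<in> V. reachable E v u}"

definition components :: "'a set \<Rightarrow> 'a set set \<Rightarrow> 'a set set" where
  "components V E = component_of V E ` V"

definition num_components :: "'a set \<Rightarrow> 'a set set \<Rightarrow> nat" where
  "num_components V E = card (components V E)"

definition edges_on :: "'a set \<Rightarrow> 'a set set \<Rightarrow> bool" where
  "edges_on V E \<longleftrightarrow> (\<forall>e\<in>E. \<exists>x y. e = {x, y} \<and> x \<in> V \<and> y \<in> V)"

lemma reachable_sym: "reachable E x y \<Longrightarrow> reachable E y x"
proof -
  have "sym (edge_rel E)"
    unfolding edge_rel_def sym_def by (auto simp: insert_commute)
  then show "reachable E x y \<Longrightarrow> reachable E y x"
    using sym_rtrancl unfolding sym_def by blast
qed

lemma reachable_trans: "reachable E x y \<Longrightarrow> reachable E y z \<Longrightarrow> reachable E x z"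
  by (rule rtrancl_trans)

lemma reachable_edge: "{x, y} \<in> E \<Longrightarrow> reachable E x y"
  unfolding edge_rel_def by auto

lemma reachable_mono: "reachable E x y \<Longrightarrow> E \<subseteq> E' \<Longrightarrow> reachable E' x y"
proof -
  assume "reachable E x y" "E \<subseteq> E'"
  moreover have "edge_rel E \<subseteq> edge_rel E'"
    using \<open>E \<subseteq> E'\<close> unfolding edge_rel_def by auto
  ultimately show ?thesis using rtrancl_mono by blast
qed

lemma reachable_insert_iff:
  "reachable (insert {x, y} E) u v \<longleftrightarrow>
     reachable E u v \<or> (reachable E u x \<and> reachable E y v) \<or> (reachable E u y \<and> reachable E x v)"
proof
  assume "reachable (insert {x, y} E) u v"
  then show "reachable E u v \<or> (reachable E u x \<and> reachable E y v) \<or> (reachable E u y \<and> reachable E x v)"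
  proof (induction rule: rtrancl_induct)
    case base
    then show ?case by simp
  next
    case (step v w)
    then consider "v = x" "w = y" | "v = y" "w = x" | "reachable E v w"
      by (auto simp: edge_rel_def doubleton_eq_iff)
    then show ?case
      by cases (use step.IH in \<open>blast intro: reachable_trans\<close>)+
  qed
next
  have edge: "reachable (insert {x, y} E) x y" "reachable (insert {x, y} E) y x"
    by (auto intro: reachable_edge)
  have old: "reachable E s t \<Longrightarrow> reachable (insert {x, y} E) s t" for s t
    by (erule reachable_mono) auto
  assume "reachable E u v \<or> (reachable E u x \<and> reachable E y v) \<or> (reachable E u y \<and> reachable E x v)"
  then show "reachable (insert {x, y} E) u v"
    using edge old by (blast intro: reachable_trans)
qed

lemma reachable_insert_if_reachable:
  "reachable E x y \<Longrightarrow> reachable (insert {x, y} E) u v \<longleftrightarrow> reachable E u v"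
  by (meson reachable_insert_iff reachable_sym reachable_trans)

lemma reachable_Un_iff:
  assumes "\<forall>e\<in>D. \<exists>x y. e = {x, y} \<and> reachable E x y"
  shows "reachable (E \<union> D) u v \<longleftrightarrow> reachable E u v"
proof
  have "edge_rel (E \<union> D) \<subseteq> (edge_rel E)\<^sup>*"
  proof
    fix z assume "z \<in> edge_rel (E \<union> D)"
    then obtain s t where z: "z = (s, t)" "{s, t} \<in> E \<union> D"
      unfolding edge_rel_def by auto
    show "z \<in> (edge_rel E)\<^sup>*"
    proof (cases "{s, t} \<in> E")
      case True
      then show ?thesis using z reachable_edge by simp
    next
      case False
      then obtain x y where "{s, t} = {x, y}" "reachable E x y"
        using z assms by blast
      then show ?thesis
        using z by (auto simp: doubleton_eq_iff dest: reachable_sym)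
    qed
  qed
  then show "reachable (E \<union> D) u v \<Longrightarrow> reachable E u v"
    using rtrancl_subset_rtrancl by blast
qed (auto elim: reachable_mono)

lemma reachable_first_edge:
  assumes "reachable E x y" "x \<noteq> y"
  obtains z where "{x, z} \<in> E"
  using assms by (cases rule: converse_rtranclE) (auto simp: edge_rel_def)

lemma component_of_self: "v \<in> V \<Longrightarrow> v \<in> component_of V E v"
  unfolding component_of_def by auto

lemma component_of_eq: "reachable E u v \<Longrightarrow> component_of V E u = component_of V E v"
  unfolding component_of_def by (meson reachable_sym reachable_trans)

lemma component_of_eq_iff:
  "u \<in> V \<Longrightarrow> v \<in> V \<Longrightarrow> component_of V E u = component_of V E v \<longleftrightarrow> reachable E u v"
  unfolding component_of_def by (auto dest: reachable_sym)

lemma finite_components: "finite V \<Longrightarrow> finite (components V E)"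
  unfolding components_def by simp

lemma components_cong:
  "(\<And>u v. reachable E u v \<longleftrightarrow> reachable E' u v) \<Longrightarrow> components V E = components V E'"
  unfolding components_def component_of_def by simp

lemma components_insert_if_reachable:
  "reachable E x y \<Longrightarrow> components V (insert {x, y} E) = components V E"
  by (rule components_cong) (rule reachable_insert_if_reachable)

lemma component_of_insert_new:
  assumes "\<not> reachable E x y"
  shows "component_of V (insert {x, y} E) v =
           (if reachable E v x \<or> reachable E v y then component_of V E x \<union> component_of V E y
            else component_of V E v)"
proof (cases "reachable E v x")
  case True
  then have "\<not> reachable E v y"
    using assms by (meson reachable_sym reachable_trans)
  with True show ?thesis
    unfolding component_of_def reachable_insert_iff
    by (auto dest: reachable_sym intro: reachable_trans)
next
  case False
  then show ?thesis
    unfolding component_of_def reachable_insert_iff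
    by (auto dest: reachable_sym intro: reachable_trans)
qed

lemma components_insert_new:
  assumes "\<not> reachable E x y" "x \<in> V" "y \<in> V"
  shows "components V (insert {x, y} E) =
           insert (component_of V E x \<union> component_of V E y)
             (components V E - {component_of V E x, component_of V E y})"
    (is "_ = insert ?XY (_ - {?X, ?Y})")
proof (intro set_eqI iffI)
  note new = component_of_insert_new[OF assms(1), of V]
  fix K
  assume "K \<in> components V (insert {x, y} E)"
  then obtain v where v: "v \<in> V" "K = component_of V (insert {x, y} E) v"
    unfolding components_def by auto
  show "K \<in> insert ?XY (components V E - {?X, ?Y})"
  proof (cases "reachable E v x \<or> reachable E v y")
    case True
    then show ?thesis using new v by auto
  next
    case False
    then have "component_of V E v \<notin> {?X, ?Y}"
      using component_of_eq_iff[of v V _ E] v assms by auto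
    then show ?thesis using new v False unfolding components_def by auto
  qed
next
  note new = component_of_insert_new[OF assms(1), of V]
  fix K
  assume K: "K \<in> insert ?XY (components V E - {?X, ?Y})"
  show "K \<in> components V (insert {x, y} E)"
  proof (cases "K = ?XY")
    case True
    then have "K = component_of V (insert {x, y} E) x" using new by auto
    then show ?thesis unfolding components_def using assms by auto
  next
    case False
    then obtain v where v: "v \<in> V" "K = component_of V E v" "K \<noteq> ?X" "K \<noteq> ?Y"
      using K unfolding components_def by auto
    then have "\<not> (reachable E v x \<or> reachable E v y)"
      using component_of_eq[where V = V and E = E] by blast
    then have "K = component_of V (insert {x, y} E) v" using new v by auto
    then show ?thesis unfolding components_def using v by auto
  qed
qed

lemma num_components_insert_new:
  assumes "\<not> reachable E x y" "x \<in> V" "y \<in> V" "finite V"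
  shows "num_components V (insert {x, y} E) + 1 = num_components V E"
proof -
  let ?X = "component_of V E x" and ?Y = "component_of V E y"
  have XY: "?X \<in> components V E" "?Y \<in> components V E" "?X \<noteq> ?Y"
    using assms component_of_eq_iff[of x V y E] unfolding components_def by auto
  have "?X \<union> ?Y \<notin> components V E"
  proof
    assume "?X \<union> ?Y \<in> components V E"
    then obtain v where v: "v \<in> V" "?X \<union> ?Y = component_of V E v"
      unfolding components_def by auto
    then have "reachable E v x" "reachable E v y"
      using component_of_self[of _ V E] assms(2,3) unfolding component_of_def by auto
    with assms(1) show False
      by (meson reachable_sym reachable_trans)
  qed
  moreover have "card {?X, ?Y} \<le> card (components V E)"
    using XY finite_components[OF assms(4)] by (intro card_mono) auto
  ultimately show ?thesis
    unfolding num_components_def components_insert_new[OF assms(1-3)]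
    using XY finite_components[OF assms(4)] by (simp add: card_Diff_subset)
qed

lemma num_components_le_insert:
  assumes "x \<in> V" "y \<in> V" "finite V"
  shows "num_components V E \<le> num_components V (insert {x, y} E) + 1"
proof (cases "reachable E x y")
  case True
  then show ?thesis
    unfolding num_components_def by (simp add: components_insert_if_reachable)
next
  case False
  then show ?thesis using num_components_insert_new[OF False assms] by simp
qed

lemma num_components_empty: "finite V \<Longrightarrow> num_components V {} = card V"
proof -
  have "component_of V {} v = {v}" if "v \<in> V" for v
    using that unfolding component_of_def edge_rel_def by auto
  then have "components V {} = (\<lambda>v. {v}) ` V"
    unfolding components_def by auto
  then show "num_components V {} = card V"
    unfolding num_components_def by (simp add: card_image)
qed

lemma num_components_le_Un_add_card:
  assumes "finite V" "finite D" "edges_on V D"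
  shows "num_components V E \<le> num_components V (E \<union> D) + card D"
  using assms(2,3)
proof (induction D rule: finite_induct)
  case empty
  then show ?case by simp
next
  case (insert e D)
  then obtain x y where "e = {x, y}" "x \<in> V" "y \<in> V" "edges_on V D"
    unfolding edges_on_def by auto
  with insert num_components_le_insert[of x V y "E \<union> D"] assms(1) show ?case
    by simp
qed

lemma card_le_num_components_add_card:
  assumes "finite V" "finite E" "edges_on V E"
  shows "card V \<le> num_components V E + card E"
  using num_components_le_Un_add_card[OF assms, of "{}"] num_components_empty[OF assms(1)]
  by simp

lemma num_components_eq_1_iff:
  assumes "V \<noteq> {}"
  shows "num_components V E = 1 \<longleftrightarrow> (\<forall>u\<in>V. \<forall>v\<in>V. reachable E u v)"
proof
  assume "num_components V E = 1"
  then obtain K where K: "components V E = {K}"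
    unfolding num_components_def by (auto simp: card_Suc_eq)
  show "\<forall>u\<in>V. \<forall>v\<in>V. reachable E u v"
  proof (intro ballI)
    fix u v
    assume "u \<in> V" "v \<in> V"
    with K have "component_of V E u = component_of V E v"
      unfolding components_def by blast
    then show "reachable E u v"
      using component_of_eq_iff[OF \<open>u \<in> V\<close> \<open>v \<in> V\<close>] by blast
  qed
next
  assume conn: "\<forall>u\<in>V. \<forall>v\<in>V. reachable E u v"
  obtain v where v: "v \<in> V"
    using assms by auto
  have "component_of V E u = component_of V E v" if "u \<in> V" for u
    using conn that v by (intro component_of_eq) blast
  then have "components V E = (\<lambda>_. component_of V E v) ` V"
    unfolding components_def by (rule image_cong[OF refl])
  then show "num_components V E = 1"
    unfolding num_components_def by (simp add: image_constant[OF v])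
qed

definition merged_components :: "'a set \<Rightarrow> 'a set set \<Rightarrow> 'a set set \<Rightarrow> 'a set set" where
  "merged_components V E D = {K \<in> components V E. K \<notin> components V (E \<union> D)}"

text \<open>Each new edge joining two components merges at most two components of E.\<close>
lemma card_merged_components:
  assumes "finite V" "finite D" "edges_on V D"
  shows "card (merged_components V E D) + 2 * num_components V (E \<union> D) \<le> 2 * num_components V E"
  unfolding merged_components_def using assms(2,3)
proof (induction D rule: finite_induct)
  case empty
  then show ?case by simp
next
  case (insert e D)
  then obtain x y where e: "e = {x, y}" "x \<in> V" "y \<in> V" and "edges_on V D"
    unfolding edges_on_def by auto
  let ?G = "E \<union> D"
  let ?merged = "\<lambda>G. {K \<in> components V E. K \<notin> components V G}"
  have IH: "card (?merged ?G) + 2 * num_components V ?G \<le> 2 * num_components V E"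
    using insert \<open>edges_on V D\<close> by blast
  have eq: "E \<union> insert e D = insert {x, y} ?G"
    using e by blast
  show ?case
  proof (cases "reachable ?G x y")
    case True
    then show ?thesis
      using IH unfolding eq num_components_def by (simp add: components_insert_if_reachable)
  next
    case False
    let ?XY = "{component_of V ?G x, component_of V ?G y}"
    have "?merged (insert {x, y} ?G) \<subseteq> ?merged ?G \<union> ?XY"
      unfolding components_insert_new[OF False e(2,3)] by blast
    then have "card (?merged (insert {x, y} ?G)) \<le> card (?merged ?G \<union> ?XY)"
      using finite_components[OF assms(1)] by (intro card_mono) auto
    also have "\<dots> \<le> card (?merged ?G) + card ?XY"
      by (rule card_Un_le)
    also have "\<dots> \<le> card (?merged ?G) + 2"
      by (simp add: card_insert_if)
    finally show ?thesis
      unfolding eq using num_components_insert_new[OF False e(2,3) assms(1)] IH by linarith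
  qed
qed

locale tree_on =
  fixes V :: "'a set" and T :: "'a set set"
  assumes finite_vertices: "finite V" and finite_edges: "finite T"
    and edges_on: "edges_on V T"
    and connected: "num_components V T = 1"
    and card_edges: "card T + 1 = card V"
begin

lemma reachable_all:
  assumes "x \<in> V" "y \<in> V"
  shows "reachable T x y"
proof -
  have "V \<noteq> {}"
    using assms by auto
  then show ?thesis
    using connected num_components_eq_1_iff[of V T] assms by simp
qed

lemma num_components_add_card_of_subset:
  assumes "S \<subseteq> T"
  shows "num_components V S + card S = card V"
proof -
  have "finite S" "edges_on V S" "edges_on V (T - S)"
    using assms finite_edges edges_on finite_subset unfolding edges_on_def by blast+
  then have "card V \<le> num_components V S + card S"
    "num_components V S \<le> num_components V T + card (T - S)"
    using card_le_num_components_add_card[OF finite_vertices]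
      num_components_le_Un_add_card[OF finite_vertices, of "T - S" S] finite_edges assms
    by (auto simp: Un_absorb1)
  moreover have "card (T - S) + card S = card T"
    using assms finite_edges by (metis card_Diff_subset card_mono finite_subset le_add_diff_inverse2)
  ultimately show ?thesis
    using connected card_edges by linarith
qed

lemma num_components_remove_edge: "e \<in> T \<Longrightarrow> num_components V (T - {e}) = 2"
  using num_components_add_card_of_subset[of "T - {e}"] card_edges finite_edges card_gt_0_iff[of T]
  by (auto simp: card_Diff_singleton)

lemma not_reachable_remove_edge:
  assumes "{u, v} \<in> T"
  shows "\<not> reachable (T - {{u, v}}) u v"
proof
  assume "reachable (T - {{u, v}}) u v"
  then have "components V (insert {u, v} (T - {{u, v}})) = components V (T - {{u, v}})"
    by (rule components_insert_if_reachable)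
  then have "num_components V T = num_components V (T - {{u, v}})"
    using assms unfolding num_components_def by (simp add: insert_absorb)
  with connected num_components_remove_edge[OF assms] show False
    by simp
qed

lemma edge_neq: "{u, v} \<in> T \<Longrightarrow> u \<noteq> v"
  using not_reachable_remove_edge by fastforce

lemma reachable_Diff:
  assumes "finite D" "D \<subseteq> T" "x \<in> V" "y \<in> V"
    and "\<forall>e\<in>D. reachable (T - {e}) x y"
  shows "reachable (T - D) x y"
  using assms(1,2,5)
proof (induction D rule: finite_induct)
  case empty
  then show ?case using reachable_all assms(3,4) by simp
next
  case (insert e D)
  let ?N = "T - D"
  have "reachable ?N x y" "e \<in> ?N"
    using insert by auto
  moreover obtain u v where e: "e = {u, v}"
    using edges_on \<open>e \<in> ?N\<close> unfolding edges_on_def by blast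
  ultimately have "reachable (insert {u, v} (?N - {e})) x y"
    by (simp add: insert_absorb)
  \<comment> \<open>otherwise the ends of e stay connected via x and y in T - {e}, but e is a bridge\<close>
  have "reachable (?N - {e}) x y"
  proof (rule ccontr)
    assume "\<not> reachable (?N - {e}) x y"
    with \<open>reachable (insert {u, v} (?N - {e})) x y\<close>
    have "(reachable (?N - {e}) x u \<and> reachable (?N - {e}) v y)
          \<or> (reachable (?N - {e}) x v \<and> reachable (?N - {e}) u y)"
      unfolding reachable_insert_iff by blast
    moreover have "reachable (?N - {e}) s t \<Longrightarrow> reachable (T - {e}) s t" for s t
      by (erule reachable_mono) auto
    ultimately have "(reachable (T - {e}) x u \<and> reachable (T - {e}) v y)
          \<or> (reachable (T - {e}) x v \<and> reachable (T - {e}) u y)"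
      by blast
    moreover have "reachable (T - {e}) x y"
      using insert.prems by simp
    ultimately have "reachable (T - {e}) u v"
      by (meson reachable_sym reachable_trans)
    moreover have "{u, v} \<in> T"
      using insert.prems e by simp
    ultimately show False
      using not_reachable_remove_edge e by simp
  qed
  then show ?case
    by (simp only: Diff_insert[of T e D])
qed

lemma exchange:
  assumes "e \<in> T" "x \<in> V" "y \<in> V" "\<not> reachable (T - {e}) x y"
  shows "num_components V (insert {x, y} (T - {e})) = 1"
    and "card (insert {x, y} (T - {e})) = card T"
proof -
  show "num_components V (insert {x, y} (T - {e})) = 1"
    using num_components_insert_new[OF assms(4) assms(2,3) finite_vertices]
      num_components_remove_edge[OF assms(1)] by linarith
  have "{x, y} \<notin> T - {e}"
    by (meson assms(4) reachable_edge)
  moreover have "0 < card T"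
    using assms(1) finite_edges card_gt_0_iff by blast
  ultimately show "card (insert {x, y} (T - {e})) = card T"
    using assms(1) finite_edges by (simp add: card_Diff_singleton)
qed

end

lemma doubleton_Suc_eq_iff: "{k, Suc k} = {i, Suc i} \<longleftrightarrow> k = i"
  by (auto simp: doubleton_eq_iff)

lemma inj_on_path_edge: "inj_on (\<lambda>k. {k, Suc k}) A"
  unfolding inj_on_def by (simp add: doubleton_Suc_eq_iff)

lemma path_edges_eq_image: "path_edges n = (\<lambda>k. {k, Suc k}) ` {..<n}"
  unfolding path_edges_def by auto

lemma finite_path_edges: "finite (path_edges n)"
  and card_path_edges: "card (path_edges n) = n"
  unfolding path_edges_eq_image by (simp_all add: card_image inj_on_path_edge)

lemma edge_weight_path_edge: "k < n \<Longrightarrow> edge_weight n c p {k, Suc k} = c k"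
proof -
  assume "k < n"
  then have "(THE i. i < n \<and> {k, Suc k} = {i, Suc i}) = k"
    by (intro the_equality) (auto simp: doubleton_Suc_eq_iff)
  with \<open>k < n\<close> show ?thesis
    unfolding edge_weight_def path_edges_def by auto
qed

lemma tree_on_path: "tree_on {0..n} (path_edges n)"
proof
  show "finite {0..n}" "finite (path_edges n)" "card (path_edges n) + 1 = card {0..n}"
    by (simp_all add: finite_path_edges card_path_edges)
  show "edges_on {0..n} (path_edges n)"
    unfolding edges_on_def path_edges_def by fastforce
  have from_0: "reachable (path_edges n) 0 k" if "k \<le> n" for k
    using that
  proof (induction k)
    case 0
    then show ?case by simp
  next
    case (Suc k)
    then have "reachable (path_edges n) k (Suc k)"
      by (intro reachable_edge) (auto simp: path_edges_def)
    with Suc show ?case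
      by (auto intro: reachable_trans)
  qed
  have "\<forall>u\<in>{0..n}. \<forall>v\<in>{0..n}. reachable (path_edges n) u v"
    using from_0 by (meson atLeastAtMost_iff reachable_sym reachable_trans)
  then show "num_components {0..n} (path_edges n) = 1"
    using num_components_eq_1_iff[of "{0..n}"] by simp
qed

lemma finite_nonpath_pairs: "finite (nonpath_pairs n)"
proof -
  have "nonpath_pairs n \<subseteq> Pow {0..n}"
    unfolding nonpath_pairs_def by auto
  then show ?thesis
    by (rule finite_subset) simp
qed

definition a_edges :: "nat \<Rightarrow> (nat \<Rightarrow> real) \<Rightarrow> real \<Rightarrow> nat set set" where
  "a_edges n c a = {{k, Suc k} | k. k < n \<and> c k = a}"

lemma a_edges_eq_image: "a_edges n c a = (\<lambda>k. {k, Suc k}) ` {k. k < n \<and> c k = a}"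
  unfolding a_edges_def by auto

lemma a_edges_subset: "a_edges n c a \<subseteq> path_edges n"
  unfolding a_edges_def path_edges_def by auto

lemma path_edge_in_a_edges_iff: "k < n \<Longrightarrow> {k, Suc k} \<in> a_edges n c a \<longleftrightarrow> c k = a"
  unfolding a_edges_def by (auto simp: doubleton_Suc_eq_iff)

lemma path_cost_eq_card_a_edges:
  assumes "\<forall>i<n. c i \<in> {a, b}"
  shows "path_cost n c = a * card (a_edges n c a) + b * (real n - card (a_edges n c a))"
proof -
  let ?S = "{k. k < n \<and> c k = a}"
  have S: "?S \<subseteq> {..<n}" "finite ?S"
    by auto
  have "path_cost n c = sum c ({..<n} - ?S) + sum c ?S"
    unfolding path_cost_def by (rule sum.subset_diff[OF S(1)]) simp
  also have "sum c ({..<n} - ?S) = sum (\<lambda>_. b) ({..<n} - ?S)"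
    using assms by (intro sum.cong) auto
  also have "\<dots> = b * card ({..<n} - ?S)"
    by simp
  also have "sum c ?S = a * card ?S"
    by simp
  also have "card ({..<n} - ?S) = n - card ?S"
    by (simp add: card_Diff_subset[OF S(2,1)])
  also have "card ?S = card (a_edges n c a)"
    unfolding a_edges_eq_image by (simp add: card_image inj_on_path_edge)
  finally have "path_cost n c = b * (n - card (a_edges n c a)) + a * card (a_edges n c a)" .
  moreover have "card (a_edges n c a) \<le> n"
    using card_mono[OF finite_path_edges a_edges_subset] by (simp add: card_path_edges)
  ultimately show ?thesis
    by (simp add: of_nat_diff)
qed

lemma a_blocks_overlap_le:
  assumes "(i, j) \<in> a_blocks n c a" "(i', j') \<in> a_blocks n c a"
    and "i \<le> t" "t \<le> j" "i' \<le> t" "t \<le> j'"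
  shows "i' \<le> i \<and> j' \<le> j"
proof -
  have "\<not> i < i'"
  proof
    assume "i < i'"
    then have "i' - 1 \<in> {i..j}" "i' \<noteq> 0"
      using assms(3-6) by auto
    then show False
      using assms(1,2) unfolding a_blocks_def by auto
  qed
  moreover have "\<not> j < j'"
  proof
    assume "j < j'"
    then have "Suc j \<in> {i'..j'}" "Suc j < n"
      using assms unfolding a_blocks_def by auto
    then show False
      using assms(1,2) unfolding a_blocks_def by auto
  qed
  ultimately show ?thesis
    by simp
qed

lemma a_blocks_overlap_eq:
  assumes "(i, j) \<in> a_blocks n c a" "(i', j') \<in> a_blocks n c a"
    and "i \<le> t" "t \<le> j" "i' \<le> t" "t \<le> j'"
  shows "(i, j) = (i', j')"
  using a_blocks_overlap_le[OF assms] a_blocks_overlap_le[OF assms(2,1) assms(5,6,3,4)]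
  by simp

lemma reachable_a_edges_from_block:
  assumes "(i, j) \<in> a_blocks n c a" "reachable (a_edges n c a) i u"
  shows "i \<le> u \<and> u \<le> Suc j"
  using assms(2)
proof (induction rule: rtrancl_induct)
  case base
  then show ?case
    using assms(1) unfolding a_blocks_def by auto
next
  case (step u u')
  from step(2) obtain k where k: "k < n" "c k = a" "{u, u'} = {k, Suc k}"
    unfolding edge_rel_def a_edges_def by blast
  have "i = 0 \<or> c (i - 1) \<noteq> a" "Suc j = n \<or> c (Suc j) \<noteq> a"
    using assms(1) unfolding a_blocks_def by auto
  with k(1,2) have "k \<noteq> Suc j" "Suc k \<noteq> i"
    by auto
  moreover from k(3) have "(u = k \<and> u' = Suc k) \<or> (u = Suc k \<and> u' = k)"
    by (metis doubleton_eq_iff)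
  ultimately show ?case
    using step(3) by auto
qed

definition bad_blocks :: "nat \<Rightarrow> (nat \<Rightarrow> real) \<Rightarrow> real \<Rightarrow> (nat \<times> nat) set" where
  "bad_blocks n c a = {(i, j) \<in> a_blocks n c a. j - i + 1 < 3}"

lemma finite_bad_blocks: "finite (bad_blocks n c a)"
proof -
  have "bad_blocks n c a \<subseteq> {..<n} \<times> {..<n}"
    unfolding bad_blocks_def a_blocks_def by auto
  then show ?thesis
    by (rule finite_subset) simp
qed

locale follower_mst =
  fixes n :: nat and c :: "nat \<Rightarrow> real" and a b :: real
    and F :: "nat set set" and p :: "nat set \<Rightarrow> real" and M :: "nat set set"
  assumes a_nonneg: "0 \<le> a" and a_less_b: "a < b"
    and costs: "\<forall>i<n. c i \<in> {a, b}"
    and leader_edges: "F \<subseteq> nonpath_pairs n"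
    and follower: "follower_choice n c F p M"
begin

abbreviation w :: "nat set \<Rightarrow> real" where
  "w \<equiv> edge_weight n c p"

lemma finite_leader_edges: "finite F"
  using leader_edges finite_nonpath_pairs by (rule finite_subset)

lemma leader_edge_not_path_edge: "e \<in> F \<Longrightarrow> e \<notin> path_edges n"
  using leader_edges unfolding nonpath_pairs_def by auto

lemma edge_weight_leader_edge: "e \<in> F \<Longrightarrow> w e = p e"
  using leader_edge_not_path_edge unfolding edge_weight_def by simp

lemma edges_on_leader_edges: "edges_on {0..n} F"
  using leader_edges unfolding edges_on_def nonpath_pairs_def by fastforce

lemma spanning_tree_follower: "spanning_tree {0..n} (path_edges n \<union> F) M"
  and follower_minimal:
    "spanning_tree {0..n} (path_edges n \<union> F) M'
       \<Longrightarrow> tree_weight n c p M \<le> tree_weight n c p M'"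
  using follower unfolding follower_choice_def is_mst_def path_vertices_def by auto

lemma tree_edges: "M \<subseteq> path_edges n \<union> F"
  and card_tree_edges: "card M = n"
  using spanning_tree_follower unfolding spanning_tree_def by auto

lemma finite_tree_edges: "finite M"
  using tree_edges finite_path_edges finite_leader_edges finite_subset by blast

lemma spanning_tree_iff_tree_on:
  "spanning_tree {0..n} (path_edges n \<union> F) T \<longleftrightarrow>
     T \<subseteq> path_edges n \<union> F \<and> num_components {0..n} T = 1 \<and> card T = n"
proof -
  have "connects {0..n} T \<longleftrightarrow> num_components {0..n} T = 1"
    using num_components_eq_1_iff[of "{0..n}" T] by (simp add: connects_def edge_rel_def)
  then show ?thesis
    unfolding spanning_tree_def by auto
qed

sublocale tree: tree_on "{0..n}" M
proof
  show "edges_on {0..n} M"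
    using tree_edges tree_on.edges_on[OF tree_on_path] edges_on_leader_edges
    unfolding edges_on_def by blast
  show "num_components {0..n} M = 1"
    using spanning_tree_follower spanning_tree_iff_tree_on by blast
qed (simp_all add: finite_tree_edges card_tree_edges)

lemma exchange_weight:
  assumes "e \<in> M" "x \<le> n" "y \<le> n" "{x, y} \<in> path_edges n \<union> F"
    and "\<not> reachable (M - {e}) x y"
  shows "w e \<le> w {x, y}"
proof -
  let ?T = "insert {x, y} (M - {e})"
  have "spanning_tree {0..n} (path_edges n \<union> F) ?T"
    unfolding spanning_tree_iff_tree_on
    using tree.exchange[of e x y] assms tree_edges card_tree_edges by auto
  then have "tree_weight n c p M \<le> tree_weight n c p ?T"
    by (rule follower_minimal)
  moreover have "{x, y} \<notin> M - {e}"
    by (meson assms(5) reachable_edge)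
  ultimately show ?thesis
    unfolding tree_weight_def using assms(1) finite_tree_edges by (simp add: sum.remove)
qed

lemma leader_price_le_b:
  assumes "e \<in> F \<inter> M"
  shows "p e \<le> b"
proof -
  obtain u v where e: "e = {u, v}" "u \<le> n" "v \<le> n"
    using tree.edges_on assms unfolding edges_on_def by auto
  have "\<exists>k<n. \<not> reachable (M - {e}) k (Suc k)"
  proof (rule ccontr)
    assume "\<not> ?thesis"
    then have path: "\<forall>d\<in>path_edges n. \<exists>x y. d = {x, y} \<and> reachable (M - {e}) x y"
      unfolding path_edges_def by auto
    have "reachable (path_edges n) u v"
      using tree_on.reachable_all[OF tree_on_path] e by simp
    then have "reachable ((M - {e}) \<union> path_edges n) u v"
      by (rule reachable_mono) blast
    then have "reachable (M - {e}) u v"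
      using reachable_Un_iff[OF path] by blast
    with tree.not_reachable_remove_edge assms e show False
      by blast
  qed
  then obtain k where k: "k < n" "\<not> reachable (M - {e}) k (Suc k)"
    by blast
  then have "w e \<le> w {k, Suc k}"
    using assms by (intro exchange_weight) (auto simp: path_edges_def)
  then have "p e \<le> c k"
    using assms k(1) by (simp add: edge_weight_leader_edge edge_weight_path_edge)
  then show ?thesis
    using costs k(1) a_less_b by auto
qed

definition cheap_edges :: "nat set set" where
  "cheap_edges = {e \<in> M. w e \<le> a}"

text \<open>The cut property of minimum spanning trees.\<close>
lemma reachable_cheap_edges:
  assumes "k < n" "c k = a"
  shows "reachable cheap_edges k (Suc k)"
proof (rule ccontr)
  assume "\<not> reachable cheap_edges k (Suc k)"
  moreover have "M - (M - cheap_edges) = cheap_edges"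
    unfolding cheap_edges_def by blast
  ultimately obtain e where e: "e \<in> M - cheap_edges" "\<not> reachable (M - {e}) k (Suc k)"
    using tree.reachable_Diff[of "M - cheap_edges" k "Suc k"] assms(1) finite_tree_edges by auto
  then have "w e \<le> w {k, Suc k}"
    using assms(1) by (intro exchange_weight) (auto simp: path_edges_def)
  with e(1) assms show False
    unfolding cheap_edges_def by (simp add: edge_weight_path_edge)
qed

definition cheap_leader_edges :: "nat set set" where
  "cheap_leader_edges = {e \<in> F \<inter> M. p e \<le> a}"

lemma finite_cheap_leader_edges: "finite cheap_leader_edges"
  unfolding cheap_leader_edges_def using finite_tree_edges by simp

lemma cheap_edges_eq: "cheap_edges = (M \<inter> a_edges n c a) \<union> cheap_leader_edges"
proof (intro set_eqI iffI)
  fix e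
  assume e: "e \<in> cheap_edges"
  then consider "e \<in> path_edges n" | "e \<in> F"
    unfolding cheap_edges_def using tree_edges by blast
  then show "e \<in> (M \<inter> a_edges n c a) \<union> cheap_leader_edges"
  proof cases
    case 1
    then obtain k where k: "k < n" "e = {k, Suc k}"
      unfolding path_edges_def by blast
    with e have "c k \<le> a"
      unfolding cheap_edges_def by (simp add: edge_weight_path_edge)
    with costs a_less_b k have "c k = a"
      by auto
    with e k show ?thesis
      unfolding cheap_edges_def by (simp add: path_edge_in_a_edges_iff)
  next
    case 2
    with e show ?thesis
      unfolding cheap_edges_def cheap_leader_edges_def by (simp add: edge_weight_leader_edge)
  qed
next
  fix e
  assume "e \<in> (M \<inter> a_edges n c a) \<union> cheap_leader_edges"
  then show "e \<in> cheap_edges"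
    unfolding cheap_edges_def cheap_leader_edges_def a_edges_def
    by (auto simp: edge_weight_path_edge edge_weight_leader_edge)
qed

lemma card_cheap_edges: "card cheap_edges = card (M \<inter> a_edges n c a) + card cheap_leader_edges"
proof -
  have "(M \<inter> a_edges n c a) \<inter> cheap_leader_edges = {}"
    using a_edges_subset leader_edge_not_path_edge unfolding cheap_leader_edges_def by blast
  then show ?thesis
    unfolding cheap_edges_eq
    using finite_tree_edges finite_cheap_leader_edges by (simp add: card_Un_disjoint)
qed

lemma card_merged_a_components:
  "card (merged_components {0..n} (a_edges n c a) cheap_edges) + 2 * card (a_edges n c a)
     \<le> 2 * (card (M \<inter> a_edges n c a) + card cheap_leader_edges)"
proof -
  let ?A = "a_edges n c a"
  have "finite cheap_edges" "edges_on {0..n} cheap_edges"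
    using finite_tree_edges tree.edges_on unfolding cheap_edges_def edges_on_def by auto
  then have merged: "card (merged_components {0..n} ?A cheap_edges)
      + 2 * num_components {0..n} (?A \<union> cheap_edges) \<le> 2 * num_components {0..n} ?A"
    by (intro card_merged_components) simp_all
  have "\<forall>d\<in>?A. \<exists>x y. d = {x, y} \<and> reachable cheap_edges x y"
    unfolding a_edges_def using reachable_cheap_edges by blast
  then have "components {0..n} (cheap_edges \<union> ?A) = components {0..n} cheap_edges"
    by (intro components_cong reachable_Un_iff)
  then have "num_components {0..n} (?A \<union> cheap_edges) = num_components {0..n} cheap_edges"
    unfolding num_components_def by (simp add: Un_commute)
  moreover have "num_components {0..n} cheap_edges + card cheap_edges = n + 1"
    using tree.num_components_add_card_of_subset[of cheap_edges] unfolding cheap_edges_def by simp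
  moreover have "num_components {0..n} ?A + card ?A = n + 1"
    using tree_on.num_components_add_card_of_subset[OF tree_on_path a_edges_subset] by simp
  ultimately show ?thesis
    using merged card_cheap_edges by presburger
qed

definition hit_bad_blocks :: "(nat \<times> nat) set" where
  "hit_bad_blocks = {(i, j) \<in> bad_blocks n c a. \<exists>t. i \<le> t \<and> t \<le> j \<and> {t, Suc t} \<in> M}"

lemma card_hit_bad_blocks: "card hit_bad_blocks + card (bad_blocks n c a - hit_bad_blocks) = num_bad_blocks n c a"
proof -
  have "hit_bad_blocks \<subseteq> bad_blocks n c a"
    unfolding hit_bad_blocks_def by auto
  then show ?thesis
    unfolding num_bad_blocks_def bad_blocks_def[symmetric]
    using finite_bad_blocks by (metis card_Diff_subset card_mono finite_subset le_add_diff_inverse)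
qed

lemma card_hit_bad_blocks_le: "card hit_bad_blocks \<le> card (M \<inter> a_edges n c a)"
proof -
  have "\<forall>B\<in>hit_bad_blocks. \<exists>t. fst B \<le> t \<and> t \<le> snd B \<and> {t, Suc t} \<in> M"
    unfolding hit_bad_blocks_def by auto
  then obtain g where g: "\<And>B. B \<in> hit_bad_blocks \<Longrightarrow> fst B \<le> g B \<and> g B \<le> snd B \<and> {g B, Suc (g B)} \<in> M"
    by metis
  have blocks: "B \<in> a_blocks n c a" if "B \<in> hit_bad_blocks" for B
    using that unfolding hit_bad_blocks_def bad_blocks_def by auto
  have "inj_on (\<lambda>B. {g B, Suc (g B)}) hit_bad_blocks"
  proof (rule inj_onI)
    fix B B'
    assume "B \<in> hit_bad_blocks" "B' \<in> hit_bad_blocks" "{g B, Suc (g B)} = {g B', Suc (g B')}"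
    with g[of B] g[of B'] blocks[of B] blocks[of B'] show "B = B'"
      using a_blocks_overlap_eq[of "fst B" "snd B" n c a "fst B'" "snd B'" "g B"]
      by (auto simp: doubleton_Suc_eq_iff)
  qed
  moreover have "(\<lambda>B. {g B, Suc (g B)}) ` hit_bad_blocks \<subseteq> M \<inter> a_edges n c a"
  proof (rule image_subsetI)
    fix B
    assume "B \<in> hit_bad_blocks"
    with g[of B] blocks[of B] have "g B < n" "c (g B) = a" "{g B, Suc (g B)} \<in> M"
      unfolding a_blocks_def by auto
    then show "{g B, Suc (g B)} \<in> M \<inter> a_edges n c a"
      by (simp add: path_edge_in_a_edges_iff)
  qed
  ultimately show ?thesis
    using finite_tree_edges by (intro card_inj_on_le) auto
qed

text \<open>The tree contains none of the at most two edges of a missed block, so the cheap path between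
  the ends of its first edge, given by the cut property, leaves the block at its first step.\<close>
lemma cheap_edge_leaving_missed_block:
  assumes "(i, j) \<in> bad_blocks n c a - hit_bad_blocks"
  shows "\<exists>v x. (v = i \<or> v = Suc i) \<and> {v, x} \<in> cheap_edges \<and> (x < i \<or> Suc j < x)"
proof -
  have "(i, j) \<in> a_blocks n c a" "j - i + 1 < 3"
    and not_hit: "\<And>t. i \<le> t \<Longrightarrow> t \<le> j \<Longrightarrow> {t, Suc t} \<notin> M"
    using assms unfolding bad_blocks_def hit_bad_blocks_def by auto
  then have ij: "i \<le> j" "j < n" "c i = a" "j = i \<or> j = Suc i"
    unfolding a_blocks_def by auto
  have tree_edge: "{v, x} \<in> M" "v \<noteq> x" if "{v, x} \<in> cheap_edges" for v x
    using that tree.edge_neq unfolding cheap_edges_def by auto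
  have reach: "reachable cheap_edges i (Suc i)"
    using ij by (intro reachable_cheap_edges) auto
  show ?thesis
  proof (cases "j = i")
    case True
    obtain x where x: "{i, x} \<in> cheap_edges"
      using reach by (rule reachable_first_edge) simp
    moreover have "x \<noteq> Suc i"
      using x tree_edge not_hit[of i] True by auto
    ultimately show ?thesis
      using True tree_edge[OF x] by (intro exI[of _ i] exI[of _ x]) auto
  next
    case False
    with ij have j: "j = Suc i"
      by simp
    obtain x where x: "{Suc i, x} \<in> cheap_edges"
      using reachable_sym[OF reach] by (rule reachable_first_edge) simp
    moreover have "x \<noteq> i" "x \<noteq> Suc (Suc i)"
      using x tree_edge not_hit[of i] not_hit[of "Suc i"] j by (auto simp: insert_commute)
    ultimately show ?thesis
      using j tree_edge[OF x] by (intro exI[of _ "Suc i"] exI[of _ x]) auto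
  qed
qed

lemma missed_block_merged:
  assumes "(i, j) \<in> bad_blocks n c a - hit_bad_blocks"
  shows "component_of {0..n} (a_edges n c a) i \<in> merged_components {0..n} (a_edges n c a) cheap_edges"
proof -
  let ?A = "a_edges n c a" and ?V = "{0..n}"
  have block: "(i, j) \<in> a_blocks n c a"
    using assms unfolding bad_blocks_def by auto
  then have i: "i < n" "c i = a"
    unfolding a_blocks_def by auto
  obtain v x where vx: "v = i \<or> v = Suc i" "{v, x} \<in> cheap_edges" "x < i \<or> Suc j < x"
    using cheap_edge_leaving_missed_block[OF assms] by blast
  have "reachable ?A i v"
    using vx(1) i by (auto intro: reachable_edge simp: path_edge_in_a_edges_iff)
  moreover have "reachable cheap_edges v x"
    using vx(2) by (rule reachable_edge)
  ultimately have reach_x: "reachable (?A \<union> cheap_edges) i x"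
    by (meson reachable_mono reachable_trans sup_ge1 sup_ge2)
  have x: "x \<le> n"
    using vx(2) tree.edges_on unfolding cheap_edges_def edges_on_def
    by (auto simp: doubleton_eq_iff)
  have "component_of ?V ?A i \<notin> components ?V (?A \<union> cheap_edges)"
  proof
    assume "component_of ?V ?A i \<in> components ?V (?A \<union> cheap_edges)"
    then obtain u where u: "component_of ?V ?A i = component_of ?V (?A \<union> cheap_edges) u"
      unfolding components_def by auto
    have "i \<in> component_of ?V (?A \<union> cheap_edges) u"
      using u component_of_self[of i ?V ?A] i(1) by simp
    with reach_x x have "x \<in> component_of ?V (?A \<union> cheap_edges) u"
      unfolding component_of_def by (auto intro: reachable_trans)
    then have "x \<in> component_of ?V ?A i"
      using u by simp
    then have "reachable ?A i x"
      unfolding component_of_def by simp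
    with reachable_a_edges_from_block[OF block] vx(3) show False
      by fastforce
  qed
  then show ?thesis
    using i(1) unfolding merged_components_def components_def by auto
qed

lemma card_missed_bad_blocks_le:
  "card (bad_blocks n c a - hit_bad_blocks) \<le> card (merged_components {0..n} (a_edges n c a) cheap_edges)"
proof -
  let ?A = "a_edges n c a" and ?V = "{0..n}"
  have "inj_on (\<lambda>B. component_of ?V ?A (fst B)) (bad_blocks n c a - hit_bad_blocks)"
  proof (rule inj_onI)
    fix B B'
    assume "B \<in> bad_blocks n c a - hit_bad_blocks" "B' \<in> bad_blocks n c a - hit_bad_blocks"
      and same: "component_of ?V ?A (fst B) = component_of ?V ?A (fst B')"
    then have blocks: "(fst B, snd B) \<in> a_blocks n c a" "(fst B', snd B') \<in> a_blocks n c a"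
      unfolding bad_blocks_def by auto
    then have le: "fst B \<le> snd B" "fst B' \<le> snd B'" "fst B \<le> n" "fst B' \<le> n"
      unfolding a_blocks_def by auto
    with same have "reachable ?A (fst B) (fst B')"
      using component_of_eq_iff[of "fst B" ?V "fst B'" ?A] by simp
    then have "fst B = fst B'"
      using reachable_a_edges_from_block[OF blocks(1)] reachable_a_edges_from_block[OF blocks(2)]
        reachable_sym by (meson le_antisym)
    then show "B = B'"
      using a_blocks_overlap_eq[OF blocks, of "fst B"] le by (simp add: prod_eq_iff)
  qed
  moreover have "(\<lambda>B. component_of ?V ?A (fst B)) ` (bad_blocks n c a - hit_bad_blocks)
      \<subseteq> merged_components ?V ?A cheap_edges"
    using missed_block_merged by auto
  moreover have "finite (merged_components ?V ?A cheap_edges)"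
    unfolding merged_components_def using finite_components[of ?V ?A] by simp
  ultimately show ?thesis
    by (rule card_inj_on_le)
qed

lemma revenue_le:
  "revenue F p M \<le> a * card cheap_leader_edges + b * (real (card (F \<inter> M)) - card cheap_leader_edges)"
proof -
  let ?L = cheap_leader_edges
  have L: "?L \<subseteq> F \<inter> M" "finite (F \<inter> M)"
    unfolding cheap_leader_edges_def using finite_tree_edges by auto
  have "card ((F \<inter> M) - ?L) = card (F \<inter> M) - card ?L"
    using card_Diff_subset[OF finite_cheap_leader_edges L(1)] .
  then have card_rest: "b * card ((F \<inter> M) - ?L) = b * (real (card (F \<inter> M)) - card ?L)"
    using card_mono[OF L(2,1)] by (simp add: of_nat_diff)
  have "revenue F p M = sum p ((F \<inter> M) - ?L) + sum p ?L"
    unfolding revenue_def by (rule sum.subset_diff[OF L])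
  moreover have "sum p ?L \<le> a * card ?L"
    using sum_mono[of ?L p "\<lambda>_. a"] unfolding cheap_leader_edges_def by (simp add: mult.commute)
  moreover have "sum p ((F \<inter> M) - ?L) \<le> b * card ((F \<inter> M) - ?L)"
    using sum_mono[of "(F \<inter> M) - ?L" p "\<lambda>_. b"] leader_price_le_b by (simp add: mult.commute)
  ultimately show ?thesis
    using card_rest by linarith
qed

lemma card_leader_tree_edges: "card (F \<inter> M) + card (path_edges n \<inter> M) = n"
proof -
  have "M = (F \<inter> M) \<union> (path_edges n \<inter> M)" "(F \<inter> M) \<inter> (path_edges n \<inter> M) = {}"
    using tree_edges leader_edge_not_path_edge by blast+
  then show ?thesis
    using card_Un_disjoint[of "F \<inter> M" "path_edges n \<inter> M"] finite_tree_edges card_tree_edges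
    by simp
qed

lemma path_cost_minus_revenue_ge:
  "a * card (M \<inter> a_edges n c a)
     + (b - a) * (real (card cheap_leader_edges) + card (M \<inter> a_edges n c a) - card (a_edges n c a))
   \<le> path_cost n c - revenue F p M"
proof -
  let ?A = "real (card (a_edges n c a))" and ?MA = "real (card (M \<inter> a_edges n c a))"
    and ?L = "real (card cheap_leader_edges)" and ?PM = "real (card (path_edges n \<inter> M))"
  have "card (M \<inter> a_edges n c a) \<le> card (path_edges n \<inter> M)"
    using a_edges_subset finite_path_edges by (intro card_mono) auto
  then have "b * ?MA \<le> b * ?PM"
    using a_nonneg a_less_b by (intro mult_left_mono) simp_all
  moreover have "revenue F p M \<le> a * ?L + b * card (F \<inter> M) - b * ?L"
    using revenue_le by (simp add: algebra_simps)
  moreover have "b * card (F \<inter> M) + b * ?PM = b * real n"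
    using card_leader_tree_edges by (metis distrib_left of_nat_add)
  moreover have "path_cost n c = a * ?A + b * real n - b * ?A"
    using path_cost_eq_card_a_edges[OF costs] by (simp add: algebra_simps)
  moreover have "a * ?MA + (b - a) * (?L + ?MA - ?A) = b * ?MA + b * ?L - a * ?L - b * ?A + a * ?A"
    by (simp add: algebra_simps)
  ultimately show ?thesis
    by linarith
qed

lemma path_cost_minus_revenue_ge_bad_blocks:
  "a * card hit_bad_blocks + (b - a) * ((card (bad_blocks n c a - hit_bad_blocks) + 1) div 2)
     \<le> path_cost n c - revenue F p M"
proof -
  let ?m = "card (bad_blocks n c a - hit_bad_blocks)"
  have "?m + 2 * card (a_edges n c a) \<le> 2 * (card (M \<inter> a_edges n c a) + card cheap_leader_edges)"
    using card_missed_bad_blocks_le card_merged_a_components by linarith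
  then have "(?m + 1) div 2 + card (a_edges n c a) \<le> card (M \<inter> a_edges n c a) + card cheap_leader_edges"
    by presburger
  then have "(b - a) * ((?m + 1) div 2)
      \<le> (b - a) * (real (card cheap_leader_edges) + card (M \<inter> a_edges n c a) - card (a_edges n c a))"
    using a_less_b by (intro mult_left_mono) linarith+
  moreover have "a * card hit_bad_blocks \<le> a * card (M \<inter> a_edges n c a)"
    using card_hit_bad_blocks_le a_nonneg by (intro mult_left_mono) simp_all
  ultimately show ?thesis
    using path_cost_minus_revenue_ge by linarith
qed

end

lemma pair_cost_subadditive:
  fixes d \<mu> :: real
  assumes "d \<le> 2 * \<mu>"
  shows "real ((k + m) div 2) * d + real ((k + m) mod 2) * \<mu>
           \<le> (real (k div 2) * d + real (k mod 2) * \<mu>) + (real (m div 2) * d + real (m mod 2) * \<mu>)"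
proof -
  have "((k + m) div 2 = k div 2 + m div 2 \<and> (k + m) mod 2 = k mod 2 + m mod 2)
      \<or> ((k + m) div 2 = k div 2 + m div 2 + 1 \<and> (k + m) mod 2 = 0 \<and> k mod 2 = 1 \<and> m mod 2 = 1)"
    by presburger
  then show ?thesis
    using assms by (auto simp: algebra_simps)
qed

lemma min_block_cost_le:
  fixes a b :: real and k m :: nat
  assumes "0 \<le> a" "a < b"
  shows "min (real (k + m) * a)
             (real ((k + m) div 2) * (b - a) + real (k + m - 2 * ((k + m) div 2)) * min a (b - a))
           \<le> a * k + (b - a) * ((m + 1) div 2)"
proof (cases "2 * a \<le> b - a")
  case True
  have "real m \<le> 2 * real ((m + 1) div 2)"
    by linarith
  then have "a * m \<le> 2 * a * ((m + 1) div 2)"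
    using mult_left_mono assms(1) by fastforce
  also have "\<dots> \<le> (b - a) * ((m + 1) div 2)"
    using True by (intro mult_right_mono) simp_all
  finally have "real (k + m) * a \<le> a * k + (b - a) * ((m + 1) div 2)"
    by (simp add: algebra_simps)
  then show ?thesis
    by (rule min.coboundedI1)
next
  case False
  define \<mu> where "\<mu> = min a (b - a)"
  have \<mu>: "\<mu> \<le> a" "\<mu> \<le> b - a" "b - a \<le> 2 * \<mu>"
    using False assms(2) unfolding \<mu>_def by (auto simp: min_def)
  define g where "g s = real (s div 2) * (b - a) + real (s mod 2) * \<mu>" for s :: nat
  have "g (k + m) \<le> g k + g m"
    unfolding g_def using \<mu>(3) by (rule pair_cost_subadditive)
  moreover have "g k \<le> a * k"
  proof -
    have "real (k div 2) * (b - a) \<le> real (k div 2) * (2 * a)" "real (k mod 2) * \<mu> \<le> real (k mod 2) * a"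
      using False \<mu>(1) by (simp_all add: mult_left_mono)
    moreover have "real k = 2 * real (k div 2) + real (k mod 2)"
      using div_mult_mod_eq[of k 2] by (metis mult.commute of_nat_add of_nat_mult of_nat_numeral)
    ultimately show ?thesis
      unfolding g_def by (simp add: algebra_simps)
  qed
  moreover have "g m \<le> (b - a) * ((m + 1) div 2)"
  proof -
    have "(m + 1) div 2 = m div 2 + m mod 2"
      by presburger
    moreover have "real (m mod 2) * \<mu> \<le> real (m mod 2) * (b - a)"
      using \<mu>(2) by (simp add: mult_left_mono)
    ultimately show ?thesis
      unfolding g_def by (simp add: algebra_simps)
  qed
  ultimately have "g (k + m) \<le> a * k + (b - a) * ((m + 1) div 2)"
    by linarith
  moreover have "k + m - 2 * ((k + m) div 2) = (k + m) mod 2"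
    by presburger
  ultimately show ?thesis
    unfolding g_def \<mu>_def by (simp add: min_le_iff_disj)
qed

theorem lemma1:
  fixes n :: nat and c :: "nat \<Rightarrow> real" and a b :: real
    and F :: "nat set set" and p :: "nat set \<Rightarrow> real" and M :: "nat set set"
  assumes "0 \<le> a" and "a < b"
    and "\<forall>i<n. c i \<in> {a, b}"
    and "F \<subseteq> nonpath_pairs n"
    and "\<forall>e\<in>F. 0 \<le> p e"
    and "follower_choice n c F p M"
  shows "revenue F p M \<le> path_cost n c -
           min (real (num_bad_blocks n c a) * a)
               (real (num_bad_blocks n c a div 2) * (b - a)
                + real (num_bad_blocks n c a - 2 * (num_bad_blocks n c a div 2)) * min a (b - a))"
proof -
  interpret follower_mst n c a b F p M
    using assms(1-4,6) by unfold_locales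
  let ?k = "card hit_bad_blocks" and ?m = "card (bad_blocks n c a - hit_bad_blocks)"
  have "num_bad_blocks n c a = ?k + ?m"
    using card_hit_bad_blocks by simp
  then show ?thesis
    using min_block_cost_le[OF assms(1,2), of ?k ?m] path_cost_minus_revenue_ge_bad_blocks
    by simp
qed

end
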